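(* Let $W,S,A$ be finite sets, let $\beta\in\Delta_{W,S}$ be a Markov kernel $\beta(s|w)$, and let $f_\beta\colon\Delta_{S,A}\to\Delta_{W,A}$ be the linear map $\pi(a|s)\mapsto\sum_s\beta(s|w)\pi(a|s)$. Let $U=\{s\in S\colon|\operatorname{supp}(\beta(s|\cdot))|>1\}$ be the set of sensor states that can be obtained from several world states. Then the set $G=f_\beta(\Delta_{S,A})$ can be written as $G=\bigcup_{\theta\in\Theta}G_\theta$ for some index set $\Theta$, where each $G_\theta$ is a Cartesian product of convex sets, $G_\theta=\prod_{w\in W}G_{\theta,w}$ with each $G_{\theta,w}\subseteq\Delta_A$ convex, and each vertex of $G_\theta$ lies in a face of $G$ of dimension at most $|U|(|A|-1)$.
   Context: $\Delta_X$ is the probability simplex on a finite set $X$; $\Delta_{X,Y}=\prod_{x\in X}\Delta_Y$ is the polytope of Markov kernels $p(y|x)$ from $X$ to $Y$. $\operatorname{supp}(\beta(s|\cdot))=\{w\in W\colon\beta(s|w)>0\}$. $G$ is a polytope (image of a polytope under a linear map). *)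

theory Defs
  imports "HOL-Analysis.Analysis"
begin

definition prob_simplex :: "(real^'a::finite) set" where
  "prob_simplex = {p. (\<forall>a. 0 \<le> p$a) \<and> (\<Sum>a\<in>UNIV. p$a) = 1}"

text \<open>Markov kernels from 'x to 'y: k$x is a distribution on 'y (k$x$y = k(y|x)).\<close>
definition markov_kernels :: "(real^'y::finite^'x::finite) set" where
  "markov_kernels = {k. \<forall>x. k$x \<in> prob_simplex}"

definition f_beta :: "real^'s::finite^'w::finite \<Rightarrow> real^'a::finite^'s \<Rightarrow> real^'a^'w" where
  "f_beta \<beta> \<pi> = (\<chi> w. \<chi> a. \<Sum>s\<in>UNIV. \<beta>$w$s * \<pi>$s$a)"

definition supp_col :: "real^'s::finite^'w::finite \<Rightarrow> 's \<Rightarrow> 'w set" where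
  "supp_col \<beta> s = {w. \<beta>$w$s > 0}"

end

theory Submission
  imports Defs
begin

text \<open>
  Call \<open>p \<in> G\<close> row-movable if \<open>G\<close> contains a non-degenerate open segment centred at \<open>p\<close>
  along which only one row \<open>p$w\<close> varies. Such a segment is a product of convex sets (an open
  segment in row \<open>w\<close>, singletons elsewhere) and has no vertices, so it can serve as a piece of the
  cover; every other point \<open>p\<close> is covered by \<open>{p}\<close> itself. For such a rigid \<open>p\<close>, every preimage
  kernel is deterministic on each sensor state \<open>s\<close> seen from exactly one world state \<open>w\<close>, since
  shifting mass between two actions of \<open>s\<close> would move only the row \<open>p$w\<close>. Hence, if \<open>F\<close> is the
  face of the polytope \<open>G\<close> with \<open>p\<close> in its relative interior, every direction \<open>q - p\<close> with
  \<open>q \<in> F\<close> is the image of a matrix with zero row sums supported on the rows in \<open>U\<close>, and such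
  matrices form a space of dimension \<open>|U|(|A| - 1)\<close>.
\<close>

lemma markov_kernels_iff:
  "k \<in> markov_kernels \<longleftrightarrow> (\<forall>x y. 0 \<le> k$x$y) \<and> (\<forall>x. (\<Sum>y\<in>UNIV. k$x$y) = 1)"
  unfolding markov_kernels_def prob_simplex_def by auto

lemma axis_nth_if: "axis i x $ j = (if j = i then x else 0)"
  by (simp add: axis_def)

lemma markov_kernel_zero_outside_supp_col:
  assumes "\<beta> \<in> markov_kernels" "w \<notin> supp_col \<beta> s"
  shows "\<beta>$w$s = 0"
  using assms by (metis markov_kernels_iff mem_Collect_eq not_less order_antisym supp_col_def)

lemma markov_kernel_rows_eq:
  assumes "k \<in> markov_kernels" "k' \<in> markov_kernels"
    and "\<And>c. c \<noteq> a \<Longrightarrow> k$s$c = 0" "\<And>c. c \<noteq> a \<Longrightarrow> k'$s$c = 0"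
  shows "k$s = k'$s"
proof -
  have "(\<Sum>c\<in>UNIV. m$s$c) = m$s$a" if "\<And>c. c \<noteq> a \<Longrightarrow> m$s$c = 0" for m :: "real^'a^'b"
    using that by (subst sum.remove[of _ a]) (auto intro: sum.neutral)
  then have "k$s$a = k'$s$a"
    using assms by (metis markov_kernels_iff)
  with assms(3,4) show ?thesis
    by (metis vec_eq_iff)
qed

lemma markov_kernel_shift_mass:
  assumes k: "k \<in> markov_kernels" and "a \<noteq> b" "\<bar>t\<bar> \<le> k$s$a" "\<bar>t\<bar> \<le> k$s$b"
  shows "k + t *\<^sub>R (axis s (axis a 1) - axis s (axis b 1)) \<in> markov_kernels"
  unfolding markov_kernels_iff
proof (intro conjI allI)
  fix x y
  show "0 \<le> (k + t *\<^sub>R (axis s (axis a 1) - axis s (axis b 1)))$x$y"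
    using assms by (auto simp: axis_def markov_kernels_iff)
next
  fix x
  show "(\<Sum>y\<in>UNIV. (k + t *\<^sub>R (axis s (axis a 1) - axis s (axis b 1)))$x$y) = 1"
    using k by (simp add: axis_def sum.distrib sum_subtractf sum_distrib_left[symmetric]
                          right_diff_distrib markov_kernels_iff)
qed

lemma convex_markov_kernels: "convex (markov_kernels :: (real^'b::finite^'c::finite) set)"
  unfolding convex_def
proof (intro ballI allI impI)
  fix x y :: "real^'b::finite^'c::finite" and u v :: real
  assume xy: "x \<in> markov_kernels" "y \<in> markov_kernels" and uv: "0 \<le> u" "0 \<le> v" "u + v = 1"
  have "(\<Sum>b\<in>UNIV. (u *\<^sub>R x + v *\<^sub>R y)$a$b) = u * (\<Sum>b\<in>UNIV. x$a$b) + v * (\<Sum>b\<in>UNIV. y$a$b)" for a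
    by (simp add: sum.distrib sum_distrib_left)
  then show "u *\<^sub>R x + v *\<^sub>R y \<in> markov_kernels"
    using xy uv by (auto simp: markov_kernels_iff)
qed

lemma polytope_markov_kernels: "polytope (markov_kernels :: (real^'b::finite^'c::finite) set)"
proof -
  let ?A = "(\<lambda>(x, y). {k::real^'b^'c. axis x (axis y 1) \<bullet> k \<ge> 0}) ` UNIV"
  let ?B = "(\<lambda>x. {k::real^'b^'c. axis x (\<chi> y. 1) \<bullet> k = 1}) ` UNIV"
  have entry: "axis x (axis y 1) \<bullet> k = k$x$y" for x y and k :: "real^'b^'c"
    by (simp add: inner_axis' inner_axis)
  have row_sum: "axis x (\<chi> y. 1) \<bullet> k = (\<Sum>y\<in>UNIV. k$x$y)" for x and k :: "real^'b^'c"
    by (simp only: inner_axis') (simp add: inner_vec_def)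
  have "markov_kernels = \<Inter>?A \<inter> \<Inter>?B"
    by (auto simp: markov_kernels_iff entry row_sum)
  moreover have "polyhedron (\<Inter>?A \<inter> \<Inter>?B)"
    by (intro polyhedron_Int polyhedron_Inter) (auto intro: polyhedron_halfspace_ge polyhedron_hyperplane)
  moreover have "bounded (markov_kernels :: (real^'b^'c) set)"
    unfolding bounded_iff
  proof (intro exI ballI)
    fix k :: "real^'b^'c" assume k: "k \<in> markov_kernels"
    have "norm k \<le> (\<Sum>x\<in>UNIV. norm (k$x))"
      unfolding norm_vec_def by (rule L2_set_le_sum) simp
    also have "\<dots> \<le> (\<Sum>x\<in>(UNIV::'c set). 1)"
    proof (rule sum_mono)
      fix x
      have "norm (k$x) \<le> (\<Sum>y\<in>UNIV. \<bar>k$x$y\<bar>)" by (rule norm_le_l1_cart)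
      also have "\<dots> = 1" using k by (simp add: markov_kernels_iff)
      finally show "norm (k$x) \<le> 1" .
    qed
    finally show "norm k \<le> real CARD('c)" by simp
  qed
  ultimately show ?thesis
    by (simp add: polytope_eq_bounded_polyhedron)
qed

lemma linear_f_beta: "linear (f_beta \<beta>)"
proof (rule linearI)
  show "f_beta \<beta> (x + y) = f_beta \<beta> x + f_beta \<beta> y" for x y
    by (simp add: f_beta_def vec_eq_iff distrib_left sum.distrib)
  show "f_beta \<beta> (c *\<^sub>R x) = c *\<^sub>R f_beta \<beta> x" for c x
    by (simp add: f_beta_def vec_eq_iff sum_distrib_left ac_simps)
qed

lemma f_beta_axis: "f_beta \<beta> (axis s (axis a 1)) = (\<chi> w. \<beta>$w$s *\<^sub>R axis a 1)"
  by (simp add: f_beta_def vec_eq_iff axis_nth_if if_distrib[of "\<lambda>x. x $ _"]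
                if_distrib[of "\<lambda>x. _ * x"] sum.delta cong: if_cong)

lemma f_beta_markov_kernels:
  assumes \<beta>: "\<beta> \<in> markov_kernels" and \<pi>: "\<pi> \<in> markov_kernels"
  shows "f_beta \<beta> \<pi> \<in> markov_kernels"
proof -
  have "(\<Sum>a\<in>UNIV. \<Sum>s\<in>UNIV. \<beta>$w$s * \<pi>$s$a) = (\<Sum>s\<in>UNIV. \<beta>$w$s * (\<Sum>a\<in>UNIV. \<pi>$s$a))" for w
    by (subst sum.swap) (simp add: sum_distrib_left)
  with \<beta> \<pi> show ?thesis
    by (auto simp: markov_kernels_iff f_beta_def intro!: sum_nonneg)
qed

lemma f_beta_cong:
  assumes "\<beta> \<in> markov_kernels" "\<And>s. supp_col \<beta> s \<noteq> {} \<Longrightarrow> \<pi>$s = \<pi>'$s"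
  shows "f_beta \<beta> \<pi> = f_beta \<beta> \<pi>'"
  unfolding f_beta_def vec_eq_iff
  using assms markov_kernel_zero_outside_supp_col by (fastforce intro!: sum.cong)

lemma polytope_f_beta_image: "polytope (f_beta \<beta> ` markov_kernels)"
  by (rule polytope_linear_image[OF linear_f_beta polytope_markov_kernels])

lemma zero_row_sums_in_span:
  fixes \<delta> :: "real^'a::finite^'s::finite"
  assumes row_sum: "\<And>s. (\<Sum>a\<in>UNIV. \<delta>$s$a) = 0" and rows: "\<And>s. s \<notin> V \<Longrightarrow> \<delta>$s = 0"
  shows "\<delta> \<in> span ((\<lambda>(s, a). axis s (axis a 1) - axis s (axis a0 1)) ` (V \<times> (UNIV - {a0})))"
    (is "_ \<in> span ?B")
proof -
  let ?e = "\<lambda>s a. axis s (axis a 1) - axis s (axis a0 1) :: real^'a^'s"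
  have row: "(\<Sum>a\<in>UNIV. \<delta>$s$a *\<^sub>R ?e s a) = axis s (\<delta>$s)" for s
    using row_sum[of s]
    by (auto simp: vec_eq_iff axis_nth_if right_diff_distrib sum_subtractf
                  sum_distrib_right[symmetric] if_distrib[of "\<lambda>x. _ * x"] cong: if_cong)
  have "\<delta> = (\<Sum>s\<in>V. axis s (\<delta>$s))"
    using rows by (auto simp: vec_eq_iff axis_nth_if)
  also have "\<dots> = (\<Sum>s\<in>V. \<Sum>a\<in>UNIV. \<delta>$s$a *\<^sub>R ?e s a)"
    by (simp add: row)
  also have "\<dots> \<in> span ?B"
  proof (intro span_sum span_scale)
    fix s a assume "s \<in> V"
    then show "?e s a \<in> span ?B"
      by (cases "a = a0") (simp_all add: span_zero span_base[OF rev_image_eqI[of "(s, a)"]])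
  qed
  finally show ?thesis .
qed

lemma polyhedron_point_in_rel_interior_of_face:
  fixes S :: "'n::euclidean_space set"
  assumes S: "polyhedron S" and p: "p \<in> S"
  obtains F where "F face_of S" "p \<in> rel_interior F"
proof -
  let ?P = "\<lambda>F. F face_of S \<and> p \<in> F"
  have "?P S" using S p by (simp add: face_of_refl polyhedron_imp_convex)
  then obtain F where F: "?P F" and least: "\<And>E. ?P E \<Longrightarrow> nat (aff_dim F + 1) \<le> nat (aff_dim E + 1)"
    using ex_has_least_nat[of ?P S "\<lambda>F. nat (aff_dim F + 1)"] by blast
  have "p \<in> rel_interior F"
  proof (rule ccontr)
    assume "p \<notin> rel_interior F"
    then have "p \<in> rel_frontier F"
      using F closure_subset by (auto simp: rel_frontier_def)
    moreover have "polyhedron F"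
      using F S face_of_polyhedron_polyhedron by blast
    ultimately obtain E where E: "E face_of F" "E \<noteq> F" "p \<in> E"
      by (auto simp: rel_frontier_of_polyhedron_alt)
    have "aff_dim E < aff_dim F"
      using E F by (meson face_of_aff_dim_lt face_of_imp_convex)
    moreover have "nat (aff_dim F + 1) \<le> nat (aff_dim E + 1)"
      using E F by (meson face_of_trans least)
    moreover have "aff_dim E \<ge> -1" by (rule aff_dim_geq)
    ultimately show False by linarith
  qed
  with F that show ?thesis by blast
qed

lemma open_segment_no_extreme_point:
  fixes a b :: "'n::euclidean_space"
  shows "\<not> v extreme_point_of open_segment a b"
proof
  assume v: "v extreme_point_of open_segment a b"
  then have "v \<in> open_segment a b" by (simp add: extreme_point_of_def)
  moreover have "open_segment a b \<noteq> {v}" by (simp add: open_segment_eq_sing)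
  ultimately show False
    using extreme_point_not_in_REL_INTERIOR[OF v] by (simp add: rel_interior_open_segment)
qed

definition row_movable :: "(real^'a::finite^'w::finite) set \<Rightarrow> real^'a^'w \<Rightarrow> bool" where
  "row_movable G p \<longleftrightarrow> (\<exists>w d. d \<noteq> 0 \<and> open_segment (p - axis w d) (p + axis w d) \<subseteq> G)"

definition row_box :: "('w::finite \<Rightarrow> 'v set) \<Rightarrow> ('v^'w) set" where
  "row_box X = {p. \<forall>w. p$w \<in> X w}"

lemma row_box_update:
  assumes "p \<in> row_box X" "x \<in> X w"
  shows "(\<chi> w'. if w' = w then x else p$w') \<in> row_box X"
  using assms by (simp add: row_box_def)

lemma row_box_rows_in_prob_simplex:
  assumes "p \<in> row_box X" "row_box X \<subseteq> markov_kernels"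
  shows "X w \<subseteq> prob_simplex"
proof
  fix x assume "x \<in> X w"
  then have "(\<chi> w'. if w' = w then x else p$w') \<in> markov_kernels"
    using row_box_update[of p X x w] assms by blast
  then have "(\<chi> w'. if w' = w then x else p$w')$w \<in> prob_simplex"
    unfolding markov_kernels_def by blast
  then show "x \<in> prob_simplex"
    by simp
qed

lemma open_segment_around:
  fixes d :: "'v::real_vector"
  assumes "d \<noteq> 0"
  shows "x \<in> open_segment (x - d) (x + d)"
proof -
  have "x - d \<noteq> x + d"
    using assms by (metis add_diff_cancel_left' diff_add_cancel add.assoc scaleR_2 scaleR_eq_0_iff
                          zero_neq_numeral)
  moreover have "midpoint (x - d) (x + d) = x"
    by (simp add: midpoint_def scaleR_add_right[symmetric])
  ultimately show ?thesis
    by (metis midpoint_in_open_segment)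
qed

lemma row_box_single_row_segment:
  fixes p :: "'v::real_vector^'w::finite"
  assumes "d \<noteq> 0"
  shows "row_box (\<lambda>w'. if w' = w then open_segment (p$w - d) (p$w + d) else {p$w'})
           = open_segment (p - axis w d) (p + axis w d)"
proof -
  have "axis w d \<noteq> 0"
    using assms by simp
  then have ends: "p$w - d \<noteq> p$w + d" "p - axis w d \<noteq> p + axis w d"
    using open_segment_around[OF assms, of "p$w"] open_segment_around[of "axis w d" p]
    by (metis empty_iff open_segment_idem)+
  have seg_row: "((1 - u) *\<^sub>R (p - axis w d) + u *\<^sub>R (p + axis w d))$w'
                   = (if w' = w then (1 - u) *\<^sub>R (p$w - d) + u *\<^sub>R (p$w + d) else p$w')" for u w'
    by (simp add: axis_nth_if algebra_simps)
  show ?thesis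
  proof (intro set_eqI iffI)
    fix x assume "x \<in> row_box (\<lambda>w'. if w' = w then open_segment (p$w - d) (p$w + d) else {p$w'})"
    then have x: "x$w' \<in> (if w' = w then open_segment (p$w - d) (p$w + d) else {p$w'})" for w'
      by (simp add: row_box_def)
    from x[of w] obtain u where "0 < u" "u < 1" "x$w = (1 - u) *\<^sub>R (p$w - d) + u *\<^sub>R (p$w + d)"
      by (auto simp: in_segment)
    moreover have "x$w' = p$w'" if "w' \<noteq> w" for w'
      using x[of w'] that by simp
    ultimately have "x = (1 - u) *\<^sub>R (p - axis w d) + u *\<^sub>R (p + axis w d)"
      unfolding vec_eq_iff seg_row by auto
    with \<open>0 < u\<close> \<open>u < 1\<close> ends show "x \<in> open_segment (p - axis w d) (p + axis w d)"
      unfolding in_segment by blast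
  next
    fix x assume "x \<in> open_segment (p - axis w d) (p + axis w d)"
    then obtain u where u: "0 < u" "u < 1" "x = (1 - u) *\<^sub>R (p - axis w d) + u *\<^sub>R (p + axis w d)"
      by (auto simp: in_segment)
    have "(1 - u) *\<^sub>R (p$w - d) + u *\<^sub>R (p$w + d) \<in> open_segment (p$w - d) (p$w + d)"
      using u ends unfolding in_segment by blast
    then show "x \<in> row_box (\<lambda>w'. if w' = w then open_segment (p$w - d) (p$w + d) else {p$w'})"
      unfolding row_box_def u(3) by (simp add: axis_nth_if algebra_simps)
  qed
qed

lemma row_movable_if_randomised_at_private_state:
  fixes \<beta> :: "real^'s::finite^'w::finite" and \<nu> :: "real^'a::finite^'s"
  assumes \<beta>: "\<beta> \<in> markov_kernels" and \<nu>: "\<nu> \<in> markov_kernels" and w: "supp_col \<beta> s = {w}"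
    and a: "\<nu>$s$a > 0" and b: "a \<noteq> b" "\<nu>$s$b > 0"
  shows "row_movable (f_beta \<beta> ` markov_kernels) (f_beta \<beta> \<nu>)"
proof -
  have \<beta>w: "\<beta>$w$s > 0"
    using w by (auto simp: supp_col_def)
  define \<epsilon> where "\<epsilon> = min (\<nu>$s$a) (\<nu>$s$b)"
  define d :: "real^'a" where "d = (\<epsilon> * \<beta>$w$s) *\<^sub>R (axis a 1 - axis b 1)"
  have "d$a \<noteq> 0"
    using a b \<beta>w by (simp add: d_def \<epsilon>_def axis_nth_if)
  then have "d \<noteq> 0" by auto
  have col: "f_beta \<beta> (axis s (axis c 1)) = axis w (\<beta>$w$s *\<^sub>R axis c 1)" for c
    using markov_kernel_zero_outside_supp_col[OF \<beta>, of _ s] w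
    by (auto simp: f_beta_axis vec_eq_iff axis_nth_if)
  have "open_segment (f_beta \<beta> \<nu> - axis w d) (f_beta \<beta> \<nu> + axis w d) \<subseteq> f_beta \<beta> ` markov_kernels"
  proof
    fix x assume "x \<in> open_segment (f_beta \<beta> \<nu> - axis w d) (f_beta \<beta> \<nu> + axis w d)"
    then obtain u where u: "0 < u" "u < 1"
      and x: "x = (1 - u) *\<^sub>R (f_beta \<beta> \<nu> - axis w d) + u *\<^sub>R (f_beta \<beta> \<nu> + axis w d)"
      by (auto simp: in_segment)
    define t where "t = (2 * u - 1) * \<epsilon>"
    define \<nu>' where "\<nu>' = \<nu> + t *\<^sub>R (axis s (axis a 1) - axis s (axis b 1))"
    have "\<bar>2 * u - 1\<bar> \<le> 1" "0 \<le> \<epsilon>"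
      using u a b by (auto simp: \<epsilon>_def)
    then have "\<bar>t\<bar> \<le> \<epsilon>"
      by (simp add: t_def abs_mult mult_left_le_one_le)
    then have "\<nu>' \<in> markov_kernels"
      unfolding \<nu>'_def using markov_kernel_shift_mass[OF \<nu> b(1)] by (simp add: \<epsilon>_def)
    moreover have "x = f_beta \<beta> \<nu>'"
    proof -
      have "f_beta \<beta> \<nu>' = f_beta \<beta> \<nu> + axis w ((t * \<beta>$w$s) *\<^sub>R (axis a 1 - axis b 1))"
        by (simp add: \<nu>'_def col linear_add[OF linear_f_beta] linear_diff[OF linear_f_beta]
                      linear_scale[OF linear_f_beta] vec_eq_iff axis_nth_if algebra_simps)
      also have "\<dots> = x"
        by (simp add: x t_def d_def vec_eq_iff axis_nth_if algebra_simps)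
      finally show ?thesis by simp
    qed
    ultimately show "x \<in> f_beta \<beta> ` markov_kernels" by blast
  qed
  with \<open>d \<noteq> 0\<close> show ?thesis
    unfolding row_movable_def by blast
qed

lemma rigid_preimage_deterministic_on_private_state:
  fixes \<beta> :: "real^'s::finite^'w::finite" and \<nu> :: "real^'a::finite^'s"
  assumes \<beta>: "\<beta> \<in> markov_kernels" and \<nu>: "\<nu> \<in> markov_kernels"
    and rigid: "\<not> row_movable (f_beta \<beta> ` markov_kernels) (f_beta \<beta> \<nu>)"
    and single: "card (supp_col \<beta> s) = 1"
  obtains a where "\<And>c. c \<noteq> a \<Longrightarrow> \<nu>$s$c = 0"
proof -
  obtain w where w: "supp_col \<beta> s = {w}"
    using single card_1_singleton_iff by (metis One_nat_def)
  have nonneg: "0 \<le> \<nu>$s$c" for c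
    using \<nu> by (simp add: markov_kernels_iff)
  obtain a where a: "\<nu>$s$a > 0"
  proof (rule ccontr)
    assume "\<not> thesis"
    then have "(\<Sum>c\<in>UNIV. \<nu>$s$c) \<le> 0"
      by (meson not_less sum_nonpos that)
    with \<nu> show False
      by (simp add: markov_kernels_iff)
  qed
  have "\<nu>$s$c = 0" if "c \<noteq> a" for c
    using row_movable_if_randomised_at_private_state[OF \<beta> \<nu> w a, of c] that rigid nonneg[of c]
    by force
  then show thesis
    by (rule that)
qed

lemma rigid_mixture_agrees_on_private_row:
  fixes \<beta> :: "real^'s::finite^'w::finite" and \<sigma> \<tau> :: "real^'a::finite^'s" and u :: real
  defines "\<nu> \<equiv> u *\<^sub>R \<tau> + (1 - u) *\<^sub>R \<sigma>"
  assumes \<beta>: "\<beta> \<in> markov_kernels" and \<sigma>: "\<sigma> \<in> markov_kernels" and \<tau>: "\<tau> \<in> markov_kernels"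
    and u: "0 \<le> u" "u < 1"
    and rigid: "\<not> row_movable (f_beta \<beta> ` markov_kernels) (f_beta \<beta> \<nu>)"
    and single: "card (supp_col \<beta> s) = 1"
  shows "\<sigma>$s = \<nu>$s"
proof -
  have \<nu>: "\<nu> \<in> markov_kernels"
    unfolding \<nu>_def using u by (intro convexD[OF convex_markov_kernels \<tau> \<sigma>]) auto
  obtain a where a: "\<And>c. c \<noteq> a \<Longrightarrow> \<nu>$s$c = 0"
    using rigid_preimage_deterministic_on_private_state[OF \<beta> \<nu> rigid single] by metis
  have "\<sigma>$s$c = 0" if "c \<noteq> a" for c
  proof -
    have "u * \<tau>$s$c + (1 - u) * \<sigma>$s$c = 0"
      using a[OF that] by (simp add: \<nu>_def)
    moreover have "0 \<le> \<tau>$s$c" "0 \<le> \<sigma>$s$c"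
      using \<sigma> \<tau> by (simp_all add: markov_kernels_iff)
    ultimately show ?thesis
      using u by (smt (verit) mult_nonneg_nonneg mult_pos_pos)
  qed
  then show ?thesis
    using markov_kernel_rows_eq[OF \<sigma> \<nu>] a by blast
qed

lemma rigid_face_direction_in_span:
  fixes \<beta> :: "real^'s::finite^'w::finite"
  defines "G \<equiv> (f_beta \<beta> :: real^'a::finite^'s \<Rightarrow> real^'a^'w) ` markov_kernels"
  assumes \<beta>: "\<beta> \<in> markov_kernels" and rigid: "\<not> row_movable G p"
    and F: "convex F" "F \<subseteq> G" "p \<in> rel_interior F" and q: "q \<in> F"
  shows "q - p \<in> span (f_beta \<beta> ` (\<lambda>(s, a). axis s (axis a 1) - axis s (axis a0 1)) `
                         ({s. card (supp_col \<beta> s) > 1} \<times> (UNIV - {a0})))"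
proof -
  let ?U = "{s. card (supp_col \<beta> s) > 1}"
  obtain e where e: "e > 1" "(1 - e) *\<^sub>R q + e *\<^sub>R p \<in> F"
    using convex_rel_interior_if2[OF F(1,3)] hull_inc[OF q] by blast
  have "q \<in> G" "(1 - e) *\<^sub>R q + e *\<^sub>R p \<in> G"
    using q e(2) F(2) by auto
  then obtain \<sigma> \<tau> where \<sigma>: "f_beta \<beta> \<sigma> = q" "\<sigma> \<in> markov_kernels"
    and \<tau>: "f_beta \<beta> \<tau> = (1 - e) *\<^sub>R q + e *\<^sub>R p" "\<tau> \<in> markov_kernels"
    unfolding G_def by (metis imageE)
  define \<nu> where "\<nu> = (1 / e) *\<^sub>R \<tau> + (1 - 1 / e) *\<^sub>R \<sigma>"
  have \<nu>: "\<nu> \<in> markov_kernels"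
    unfolding \<nu>_def using e(1) by (intro convexD[OF convex_markov_kernels \<tau>(2) \<sigma>(2)]) auto
  have "f_beta \<beta> \<nu> = (1 / e) *\<^sub>R ((1 - e) *\<^sub>R q + e *\<^sub>R p) + (1 - 1 / e) *\<^sub>R q"
    by (simp add: \<nu>_def \<sigma>(1) \<tau>(1) linear_add[OF linear_f_beta] linear_scale[OF linear_f_beta])
  also have "\<dots> = ((1 / e) * (1 - e) + (1 - 1 / e)) *\<^sub>R q + ((1 / e) * e) *\<^sub>R p"
    by (simp add: scaleR_add_right scaleR_add_left)
  also have "\<dots> = p"
    using e(1) by (simp add: field_simps)
  finally have f\<nu>: "f_beta \<beta> \<nu> = p" .
  define \<delta> :: "real^'a^'s" where "\<delta> = (\<chi> s. if s \<in> ?U then \<sigma>$s - \<nu>$s else 0)"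
  have "f_beta \<beta> \<delta> = f_beta \<beta> (\<sigma> - \<nu>)"
  proof (rule f_beta_cong[OF \<beta>])
    fix s assume "supp_col \<beta> s \<noteq> {}"
    then have "card (supp_col \<beta> s) \<noteq> 0"
      by simp
    then have "s \<in> ?U \<or> card (supp_col \<beta> s) = 1"
      by (simp only: mem_Collect_eq) presburger
    moreover have "\<sigma>$s = \<nu>$s" if "card (supp_col \<beta> s) = 1"
      unfolding \<nu>_def
    proof (rule rigid_mixture_agrees_on_private_row[OF \<beta> \<sigma>(2) \<tau>(2) _ _ _ that])
      show "0 \<le> 1 / e" "1 / e < 1"
        using e(1) by auto
      show "\<not> row_movable (f_beta \<beta> ` markov_kernels) (f_beta \<beta> ((1 / e) *\<^sub>R \<tau> + (1 - 1 / e) *\<^sub>R \<sigma>))"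
        using rigid f\<nu> unfolding G_def \<nu>_def by simp
    qed
    ultimately show "\<delta>$s = (\<sigma> - \<nu>)$s"
      by (auto simp: \<delta>_def)
  qed
  also have "\<dots> = q - p"
    by (simp add: linear_diff[OF linear_f_beta] \<sigma>(1) f\<nu>)
  finally have f\<delta>: "f_beta \<beta> \<delta> = q - p" .
  have \<delta>_span: "\<delta> \<in> span ((\<lambda>(s, a). axis s (axis a 1) - axis s (axis a0 1)) ` (?U \<times> (UNIV - {a0})))"
    using \<sigma>(2) \<nu>
    by (intro zero_row_sums_in_span) (auto simp: \<delta>_def markov_kernels_iff sum_subtractf)
  have "q - p \<in> f_beta \<beta> ` span ((\<lambda>(s, a). axis s (axis a 1) - axis s (axis a0 1)) `
                                             (?U \<times> (UNIV - {a0})))"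
    using image_eqI[of "q - p" "f_beta \<beta>" \<delta>, OF f\<delta>[symmetric] \<delta>_span] .
  then show ?thesis
    by (simp add: span_linear_image[OF linear_f_beta])
qed

lemma rigid_point_in_low_dimensional_face:
  fixes \<beta> :: "real^'s::finite^'w::finite"
  defines "G \<equiv> (f_beta \<beta> :: real^'a::finite^'s \<Rightarrow> real^'a^'w) ` markov_kernels"
  assumes \<beta>: "\<beta> \<in> markov_kernels" and p: "p \<in> G" and rigid: "\<not> row_movable G p"
  obtains F where "F face_of G" "p \<in> F"
    "aff_dim F \<le> int (card {s. card (supp_col \<beta> s) > 1}) * (int CARD('a) - 1)"
proof -
  let ?U = "{s. card (supp_col \<beta> s) > 1}"
  have "polyhedron G"
    unfolding G_def by (intro polytope_imp_polyhedron polytope_f_beta_image)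
  then obtain F where F: "F face_of G" "p \<in> rel_interior F"
    using polyhedron_point_in_rel_interior_of_face p by blast
  have "F \<subseteq> G" "convex F"
    using F(1) face_of_imp_subset face_of_imp_convex by blast+
  obtain a0 :: 'a where True by simp
  define B :: "(real^'a^'s) set"
    where "B = (\<lambda>(s, a). axis s (axis a 1) - axis s (axis a0 1)) ` (?U \<times> (UNIV - {a0}))"
  have "p \<in> affine hull F"
    using F(2) rel_interior_subset hull_inc by (metis subsetD)
  then have "aff_dim F = int (dim ((\<lambda>q. q - p) ` F))"
    by (rule aff_dim_eq_dim_subtract)
  also have "dim ((\<lambda>q. q - p) ` F) \<le> card (f_beta \<beta> ` B)"
  proof (rule dim_le_card)
    show "(\<lambda>q. q - p) ` F \<subseteq> span (f_beta \<beta> ` B)"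
      unfolding B_def
      using rigid_face_direction_in_span[OF \<beta> rigid[unfolded G_def] \<open>convex F\<close>
              \<open>F \<subseteq> G\<close>[unfolded G_def] F(2)]
      by blast
  qed (simp add: B_def)
  also have "card (f_beta \<beta> ` B) \<le> card B"
    by (rule card_image_le) (simp add: B_def)
  also have "card B \<le> card (?U \<times> (UNIV - {a0}))"
    unfolding B_def by (rule card_image_le) simp
  also have "\<dots> = card ?U * (CARD('a) - 1)"
    by (simp add: card_cartesian_product card_Diff_singleton)
  finally have "aff_dim F \<le> int (card ?U * (CARD('a) - 1))"
    by linarith
  also have "\<dots> = int (card ?U) * (int CARD('a) - 1)"
    by (simp add: of_nat_diff Suc_leI)
  finally show thesis
    using that F(1) F(2) rel_interior_subset by blast
qed

definition vertices_in_faces_of_dim_le :: "'n::euclidean_space set \<Rightarrow> int \<Rightarrow> 'n set \<Rightarrow> bool" where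
  "vertices_in_faces_of_dim_le G k C \<longleftrightarrow>
     (\<forall>v. v extreme_point_of C \<longrightarrow> (\<exists>F. F face_of G \<and> v \<in> F \<and> aff_dim F \<le> k))"

lemma row_box_around_point:
  fixes \<beta> :: "real^'s::finite^'w::finite"
  defines "G \<equiv> (f_beta \<beta> :: real^'a::finite^'s \<Rightarrow> real^'a^'w) ` markov_kernels"
  assumes \<beta>: "\<beta> \<in> markov_kernels" and p: "p \<in> G"
  shows "\<exists>X. (\<forall>w. convex (X w) \<and> X w \<subseteq> prob_simplex) \<and> p \<in> row_box X \<and> row_box X \<subseteq> G \<and>
           vertices_in_faces_of_dim_le G
             (int (card {s. card (supp_col \<beta> s) > 1}) * (int CARD('a) - 1)) (row_box X)"
proof -
  let ?k = "int (card {s. card (supp_col \<beta> s) > 1}) * (int CARD('a) - 1)"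
  have "\<exists>X. (\<forall>w. convex (X w)) \<and> p \<in> row_box X \<and> row_box X \<subseteq> G \<and>
          vertices_in_faces_of_dim_le G ?k (row_box X)"
  proof (cases "row_movable G p")
    case True
    then obtain w d where d: "d \<noteq> 0" "open_segment (p - axis w d) (p + axis w d) \<subseteq> G"
      unfolding row_movable_def by blast
    let ?X = "\<lambda>w'. if w' = w then open_segment (p$w - d) (p$w + d) else {p$w'}"
    have box: "row_box ?X = open_segment (p - axis w d) (p + axis w d)"
      by (rule row_box_single_row_segment[OF d(1)])
    have "p \<in> row_box ?X"
      using open_segment_around[OF d(1)] by (simp add: row_box_def)
    then show ?thesis
      using d(2) by (intro exI[of _ ?X])
        (simp add: box convex_open_segment open_segment_no_extreme_point
                   vertices_in_faces_of_dim_le_def)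
  next
    case False
    obtain F where "F face_of G" "p \<in> F" "aff_dim F \<le> ?k"
      using rigid_point_in_low_dimensional_face[OF \<beta> p[unfolded G_def] False[unfolded G_def]]
      unfolding G_def by blast
    moreover have "row_box (\<lambda>w. {p$w}) = {p}"
      by (auto simp: row_box_def vec_eq_iff)
    ultimately show ?thesis
      using p by (intro exI[of _ "\<lambda>w. {p$w}"])
        (auto simp: vertices_in_faces_of_dim_le_def extreme_point_of_def)
  qed
  then obtain X where X: "\<forall>w. convex (X w)" "p \<in> row_box X" "row_box X \<subseteq> G"
    "vertices_in_faces_of_dim_le G ?k (row_box X)"
    by blast
  moreover have "G \<subseteq> markov_kernels"
    unfolding G_def using f_beta_markov_kernels[OF \<beta>] by blast
  then have "X w \<subseteq> prob_simplex" for w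
    using row_box_rows_in_prob_simplex X(2,3) by blast
  ultimately show ?thesis
    by blast
qed

theorem proposition5:
  fixes \<beta> :: "real^'s::finite^'w::finite"
  assumes "\<beta> \<in> markov_kernels"
  defines "U \<equiv> {s. card (supp_col \<beta> s) > 1}"
  defines "G \<equiv> (f_beta \<beta> :: real^'a::finite^'s \<Rightarrow> real^'a^'w) ` markov_kernels"
  shows "\<exists>\<Theta> :: (real^'a^'w) set set.
           \<Union>\<Theta> = G \<and>
           (\<forall>C\<in>\<Theta>. \<exists>Gw :: 'w \<Rightarrow> (real^'a) set.
               (\<forall>w. convex (Gw w) \<and> Gw w \<subseteq> prob_simplex) \<and>
               C = {p. \<forall>w. p$w \<in> Gw w}) \<and>
           (\<forall>C\<in>\<Theta>. \<forall>v. v extreme_point_of C \<longrightarrow>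
               (\<exists>F. F face_of G \<and> v \<in> F \<and>
                    aff_dim F \<le> int (card U) * (int CARD('a) - 1)))"
proof -
  let ?k = "int (card U) * (int CARD('a) - 1)"
  have local_boxes: "\<forall>p\<in>G. \<exists>X. (\<forall>w. convex (X w) \<and> X w \<subseteq> prob_simplex) \<and> p \<in> row_box X \<and>
      row_box X \<subseteq> G \<and> vertices_in_faces_of_dim_le G ?k (row_box X)"
    unfolding G_def U_def by (intro ballI row_box_around_point[OF assms(1)])
  obtain X where X: "\<forall>p\<in>G. (\<forall>w. convex (X p w) \<and> X p w \<subseteq> prob_simplex) \<and>
      p \<in> row_box (X p) \<and> row_box (X p) \<subseteq> G \<and> vertices_in_faces_of_dim_le G ?k (row_box (X p))"
    using bchoice[OF local_boxes] by (elim exE)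
  show ?thesis
  proof (intro exI[of _ "(\<lambda>p. row_box (X p)) ` G"] conjI)
    show "\<Union> ((\<lambda>p. row_box (X p)) ` G) = G"
      using X by blast
    show "\<forall>C\<in>(\<lambda>p. row_box (X p)) ` G. \<exists>Gw. (\<forall>w. convex (Gw w) \<and> Gw w \<subseteq> prob_simplex) \<and>
            C = {p. \<forall>w. p$w \<in> Gw w}"
    proof
      fix C assume "C \<in> (\<lambda>p. row_box (X p)) ` G"
      then obtain p where "p \<in> G" "C = row_box (X p)"
        by blast
      with X show "\<exists>Gw. (\<forall>w. convex (Gw w) \<and> Gw w \<subseteq> prob_simplex) \<and> C = {p. \<forall>w. p$w \<in> Gw w}"
        by (intro exI[of _ "X p"]) (simp add: row_box_def)
    qed
    show "\<forall>C\<in>(\<lambda>p. row_box (X p)) ` G. \<forall>v. v extreme_point_of C \<longrightarrow>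
            (\<exists>F. F face_of G \<and> v \<in> F \<and> aff_dim F \<le> ?k)"
      using X by (simp add: vertices_in_faces_of_dim_le_def)
  qed
qed

end
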